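(* Let $p>3$ be prime, $t\in\{1,3,p,3p\}$, and $1\le r\le 3p-1$ with $\gcd(r,3p)=1$. Then \[\Lambda(1,r,t)=\begin{cases}\emptyset & \text{if } r\equiv 1\pmod 3,\\ \{\ell\in\Delta(|r|_p): \ell\text{ odd}\} & \text{if } r\equiv 2\pmod 3.\end{cases}\]
   Context: $|r|_m$ is the multiplicative order of $r$ modulo $m$ (with $|r|_1=1$). $S_k(x):=1+x+\cdots+x^{k-1}$, $S_0:=0$. For $m\ge1$ with $\gcd(r,m)=1$, $\kappa(m,r,t):=\dfrac{m|r|_m}{\gcd(m,\,tS_{|r|_m}(r))}$. For $d\in\{1,3,p,3p\}$, $\Lambda(d,r,t):=\{\ell>0:\ \ell \text{ divides } \frac{|r|_{3p}}{\gcd(\kappa(d,r,t),|r|_{3p})}\text{ and }\gcd(r^{\ell\kappa(d,r,t)}-1,3p)=d\}$. For a positive integer $m$, $\Delta(m):=\{\ell: 0<\ell<m,\ \ell\mid m\}$ (proper positive divisors of $m$). *)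

theory Defs
  imports "HOL-Number_Theory.Number_Theory"
begin

text \<open>Multiplicative order: the library's ord m r (with ord 1 r = 1).
  S k x = 1 + x + ... + x^(k-1), S 0 x = 0.\<close>

definition S :: "nat \<Rightarrow> nat \<Rightarrow> nat" where
  "S k x = (\<Sum>i<k. x ^ i)"

definition kappa :: "nat \<Rightarrow> nat \<Rightarrow> nat \<Rightarrow> nat" where
  "kappa m r t = (m * ord m r) div gcd m (t * S (ord m r) r)"

definition Lambda :: "nat \<Rightarrow> nat \<Rightarrow> nat \<Rightarrow> nat \<Rightarrow> nat set" where
  "Lambda p d r t = {l. l > 0 \<and>
     l dvd (ord (3*p) r div gcd (kappa d r t) (ord (3*p) r)) \<and>
     gcd (r ^ (l * kappa d r t) - 1) (3*p) = d}"

definition Delta :: "nat \<Rightarrow> nat set" where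
  "Delta m = {l. 0 < l \<and> l < m \<and> l dvd m}"

end

theory Submission
  imports Defs
begin

text \<open>Since \<open>\<kappa>(1,r,t) = 1\<close>, \<open>\<Lambda>(1,r,t)\<close> consists of the divisors \<open>\<ell>\<close> of
  \<open>|r|\<^sub>3\<^sub>p = lcm |r|\<^sub>3 |r|\<^sub>p\<close> for which \<open>r\<^sup>\<ell> - 1\<close> is prime to \<open>3p\<close>, i.e.
  neither \<open>|r|\<^sub>3\<close> nor \<open>|r|\<^sub>p\<close> divides \<open>\<ell>\<close>.
  If \<open>r \<equiv> 1 (mod 3)\<close> then \<open>|r|\<^sub>3 = 1\<close> divides every \<open>\<ell>\<close>. If \<open>r \<equiv> 2 (mod 3)\<close> then
  \<open>|r|\<^sub>3 = 2\<close>, so \<open>\<ell>\<close> is odd, and the odd divisors of \<open>lcm 2 |r|\<^sub>p\<close> that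
  \<open>|r|\<^sub>p\<close> does not divide are exactly the odd proper divisors of \<open>|r|\<^sub>p\<close>.\<close>

lemma kappa_1_left [simp]: "kappa 1 r t = 1"
  by (simp add: kappa_def)

lemma coprime_prime_right_iff:
  fixes q x :: nat
  assumes "prime q"
  shows "coprime x q \<longleftrightarrow> \<not> q dvd x"
  using assms by (metis coprime_absorb_right coprime_commute not_prime_unit prime_imp_coprime)

lemma dvd_power_minus_1_iff_ord_dvd:
  fixes n r l :: nat
  assumes "0 < r"
  shows "n dvd r ^ l - 1 \<longleftrightarrow> ord n r dvd l"
proof -
  have "1 \<le> r ^ l" using assms by simp
  then have "n dvd r ^ l - 1 \<longleftrightarrow> [r ^ l = 1] (mod n)"
    by (simp add: cong_altdef_nat)
  also have "\<dots> \<longleftrightarrow> ord n r dvd l" by (rule ord_divides)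
  finally show ?thesis .
qed

lemma Lambda_1_eq:
  fixes p r t :: nat
  assumes "prime p" "p \<noteq> 3" "0 < r"
  shows "Lambda p 1 r t =
    {l. 0 < l \<and> l dvd lcm (ord 3 r) (ord p r) \<and> \<not> ord 3 r dvd l \<and> \<not> ord p r dvd l}"
proof -
  have "coprime (3::nat) p"
    using assms(1,2) by (simp add: primes_coprime)
  then have ord_3p: "ord (3 * p) r = lcm (ord 3 r) (ord p r)"
    by (rule ord_modulus_mult_coprime)
  have "gcd (r ^ l - 1) (3 * p) = 1 \<longleftrightarrow> \<not> ord 3 r dvd l \<and> \<not> ord p r dvd l" for l
  proof -
    have "gcd (r ^ l - 1) (3 * p) = 1 \<longleftrightarrow> coprime (r ^ l - 1) 3 \<and> coprime (r ^ l - 1) p"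
      by (simp only: coprime_iff_gcd_eq_1 [symmetric] coprime_mult_right_iff)
    also have "\<dots> \<longleftrightarrow> \<not> 3 dvd r ^ l - 1 \<and> \<not> p dvd r ^ l - 1"
      using assms(1) by (simp add: coprime_prime_right_iff)
    also have "\<dots> \<longleftrightarrow> \<not> ord 3 r dvd l \<and> \<not> ord p r dvd l"
      using assms(3) by (simp only: dvd_power_minus_1_iff_ord_dvd)
    finally show ?thesis .
  qed
  then show ?thesis
    unfolding Lambda_def kappa_1_left ord_3p by simp
qed

lemma odd_dvd_lcm_2_iff:
  fixes l k :: nat
  assumes "odd l"
  shows "l dvd lcm 2 k \<longleftrightarrow> l dvd k"
proof
  assume "l dvd lcm 2 k"
  moreover have "lcm 2 k dvd 2 * k" by (simp add: lcm_least)
  ultimately have "l dvd 2 * k" by (rule dvd_trans)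
  moreover have "coprime l 2" using assms by simp
  ultimately show "l dvd k" using coprime_dvd_mult_right_iff by blast
qed (use dvd_lcm2 dvd_trans in blast)

lemma mem_Delta_iff:
  assumes "0 < k"
  shows "l \<in> Delta k \<longleftrightarrow> 0 < l \<and> l dvd k \<and> \<not> k dvd l"
  using assms by (auto simp: Delta_def dest: dvd_imp_le dvd_antisym)

lemma ord_3_2: "ord 3 (2::nat) = 2"
  by (simp add: ord_eq_2_iff cong_def)

theorem lemma5p2:
  fixes p r t :: nat
  assumes "prime p" and "p > 3"
    and "t \<in> {1, 3, p, 3*p}"
    and "1 \<le> r" and "r \<le> 3*p - 1" and "coprime r (3*p)"
  shows "(r mod 3 = 1 \<longrightarrow> Lambda p 1 r t = {})
       \<and> (r mod 3 = 2 \<longrightarrow> Lambda p 1 r t = {l \<in> Delta (ord p r). odd l})"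
proof -
  have Lambda: "Lambda p 1 r t =
    {l. 0 < l \<and> l dvd lcm (ord 3 r) (ord p r) \<and> \<not> ord 3 r dvd l \<and> \<not> ord p r dvd l}"
    using assms(1,2,4) by (intro Lambda_1_eq) auto
  show ?thesis
  proof (intro conjI impI)
    assume "r mod 3 = 1"
    then have "ord 3 r = 1" by (metis ord_mod ord_1_right)
    then show "Lambda p 1 r t = {}" unfolding Lambda by simp
  next
    assume "r mod 3 = 2"
    then have "ord 3 r = 2" by (metis ord_mod ord_3_2)
    moreover have "0 < ord p r"
      using assms(6) by (simp add: coprime_commute)
    ultimately show "Lambda p 1 r t = {l \<in> Delta (ord p r). odd l}"
      unfolding Lambda by (auto simp: mem_Delta_iff odd_dvd_lcm_2_iff)
  qed
qed

end
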